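(* Let $R$ be a commutative ring and $d\in\mathbb{N}$. Then $H_a(\widetilde{S}_{-*}M(d))=0$ for every $a\ge1$; equivalently, for every $n\in\mathbb{N}$ and every $a\ge1$, the homology of the complex of $R$-modules $(\widetilde{S}_{-*}M(d))([n])$ at the term $(\widetilde{S}_{-a}M(d))([n])$ vanishes.
   Context: Let $R$ be a commutative ring. $\mathrm{FI}$ denotes the category of finite sets and injective maps; an $\mathrm{FI}$-module is a covariant functor from $\mathrm{FI}$ to $R$-modules. For $n\in\mathbb{N}$, $[n]=\{1,\dots,n\}$. For $d\in\mathbb{N}$, $M(d)$ is the $\mathrm{FI}$-module with $M(d)(X)=R\,\mathrm{Hom}_{\mathrm{FI}}([d],X)$ (free $R$-module on injections $[d]\to X$), with injections $X\to X'$ acting by post-composition. The complex $\widetilde{S}_{-*}V$: for a finite set $I$, $\det(I)=\bigwedge^{|I|}RI$ where $RI$ is free on $I$ ($\det(\emptyset)=R$). For an $\mathrm{FI}$-module $V$, finite set $X$, $T\subset X$, $i\in X\setminus T$, $v\in V(T)$, write $i(v)$ for the image of $v$ under the inclusion $T\to T\cup\{i\}$. Set $(\widetilde{S}_{-a}V)(X)=\bigoplus_{I\subset X,|I|=a}V(X\setminus I)\otimes_R\det(I)$, with differential $d(v\otimes i_1\wedge\cdots\wedge i_a)=\sum_{p=1}^a(-1)^p i_p(v)\otimes i_1\wedge\cdots\widehat{i_p}\cdots\wedge i_a$ for $v\in V(X\setminus I)$, $I=\{i_1,\dots,i_a\}$; an injection $\alpha:X\to X'$ acts by $v\otimes i_1\wedge\cdots\wedge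 i_a\mapsto\alpha(v)\otimes\alpha(i_1)\wedge\cdots\wedge\alpha(i_a)$. Thus $\cdots\to\widetilde{S}_{-1}V\to\widetilde{S}_0V\to0$ is a complex of $\mathrm{FI}$-modules, and $H_a(\widetilde{S}_{-*}V)$ denotes its homology at $\widetilde{S}_{-a}V$. *)

theory Defs
  imports "HOL-Library.FuncSet"
begin

text \<open>The R-module (S~_{-a} M(d))([n]) = (+)_{I \<subseteq> [n], |I| = a} R Hom_FI([d],[n]-I) (x) det(I)
  is free with basis the pairs (I, f) with I \<subseteq> [n], |I| = a and f : [d] \<rightarrow> [n] - I injective
  (f represented extensionally on {1..d}); the pair (I,f) stands for
  f (x) i_1 \<and> ... \<and> i_a with i_1 < ... < i_a the elements of I in increasing order.\<close>

definition Sbasis :: "nat \<Rightarrow> nat \<Rightarrow> nat \<Rightarrow> (nat set \<times> (nat \<Rightarrow> nat)) set" where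
  "Sbasis d n a = {(I, f). I \<subseteq> {1..n} \<and> card I = a \<and>
      f \<in> {1..d} \<rightarrow>\<^sub>E ({1..n} - I) \<and> inj_on f {1..d}}"

definition Schains :: "nat \<Rightarrow> nat \<Rightarrow> nat \<Rightarrow> (nat set \<times> (nat \<Rightarrow> nat) \<Rightarrow> 'r::comm_ring_1) set" where
  "Schains d n a = {c. \<forall>x. x \<notin> Sbasis d n a \<longrightarrow> c x = 0}"

text \<open>Position p (1-indexed) of i among the elements of I listed increasingly.\<close>
definition wedge_pos :: "nat \<Rightarrow> nat set \<Rightarrow> nat" where
  "wedge_pos i I = card {j \<in> I. j \<le> i}"

text \<open>The differential d(f (x) i_1\<and>...\<and>i_a) = \<Sum>_p (-1)^p i_p(f) (x) i_1\<and>..^i_p..\<and>i_a,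
  where i_p(f) is f composed with the inclusion, i.e. the same map f;
  extended R-linearly from S~_{-a} to S~_{-(a-1)}.\<close>
definition Sdiff :: "nat \<Rightarrow> nat \<Rightarrow> nat \<Rightarrow> (nat set \<times> (nat \<Rightarrow> nat) \<Rightarrow> 'r::comm_ring_1)
    \<Rightarrow> (nat set \<times> (nat \<Rightarrow> nat) \<Rightarrow> 'r)" where
  "Sdiff d n a c = (\<lambda>(J, g). \<Sum>(I, f)\<in>Sbasis d n a. \<Sum>i\<in>I.
      if I - {i} = J \<and> f = g then (-1) ^ wedge_pos i I * c (I, f) else 0)"

end

theory Submission
  imports Defs
begin

text \<open>For a basis element f \<otimes> i_1 \<and> ... \<and> i_a, let v be the least point of [n] not hit by f.
  Wedging with v, i.e. (I, f) \<mapsto> -(I \<union> {v}, f), is a contracting homotopy in positive degrees: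
  as v precedes every other free point, it always sits in position 1 of the wedge, so
  d h + h d = id.\<close>

definition free_points :: "nat \<Rightarrow> nat \<Rightarrow> (nat \<Rightarrow> nat) \<Rightarrow> nat set" where
  "free_points d n g = {1..n} - g ` {1..d}"

definition first_free :: "nat \<Rightarrow> nat \<Rightarrow> (nat \<Rightarrow> nat) \<Rightarrow> nat" where
  "first_free d n g = Min (free_points d n g)"

definition Shomotopy :: "nat \<Rightarrow> nat \<Rightarrow> nat \<Rightarrow> (nat set \<times> (nat \<Rightarrow> nat) \<Rightarrow> 'r::comm_ring_1)
    \<Rightarrow> (nat set \<times> (nat \<Rightarrow> nat) \<Rightarrow> 'r)" where
  "Shomotopy d n a c = (\<lambda>(K, g).
      if (K, g) \<in> Sbasis d n (Suc a) \<and> first_free d n g \<in> K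
      then - c (K - {first_free d n g}, g) else 0)"

lemma finite_free_points [simp]: "finite (free_points d n g)"
  by (simp add: free_points_def)

lemma first_free_in:
  "free_points d n g \<noteq> {} \<Longrightarrow> first_free d n g \<in> free_points d n g"
  unfolding first_free_def by (rule Min_in) simp_all

lemma first_free_le: "i \<in> free_points d n g \<Longrightarrow> first_free d n g \<le> i"
  unfolding first_free_def by (rule Min_le) simp_all

lemma finite_Sbasis: "finite (Sbasis d n a)"
proof (rule finite_subset)
  show "Sbasis d n a \<subseteq> Pow {1..n} \<times> ({1..d} \<rightarrow>\<^sub>E {1..n})"
    unfolding Sbasis_def by (auto simp: PiE_def Pi_def)
  show "finite (Pow {1..n} \<times> ({1..d::nat} \<rightarrow>\<^sub>E {1..n::nat}))"
    by (intro finite_cartesian_product finite_PiE) auto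
qed

lemma Sbasis_D:
  assumes "(J, g) \<in> Sbasis d n a"
  shows "J \<subseteq> free_points d n g" "finite J" "card J = a"
  using assms unfolding Sbasis_def free_points_def
  by (auto simp: PiE_def Pi_def intro: finite_subset)

lemma insert_in_Sbasis:
  assumes "(J, g) \<in> Sbasis d n a" "i \<in> free_points d n g - J"
  shows "(insert i J, g) \<in> Sbasis d n (Suc a)"
  using assms Sbasis_D(2)[OF assms(1)]
  unfolding Sbasis_def free_points_def by (auto simp: PiE_def Pi_def)

lemma Sbasis_insertD:
  assumes "(insert i J, g) \<in> Sbasis d n (Suc a)" "i \<notin> J"
  shows "(J, g) \<in> Sbasis d n a"
  using assms Sbasis_D(2)[OF assms(1)]
  unfolding Sbasis_def by (auto simp: PiE_def Pi_def)

lemma Schains_zero: "c \<in> Schains d n a \<Longrightarrow> x \<notin> Sbasis d n a \<Longrightarrow> c x = 0"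
  unfolding Schains_def by blast

lemma wedge_pos_insert_least:
  assumes "\<forall>j\<in>J. v < j"
  shows "wedge_pos v (insert v J) = 1"
proof -
  have "{j \<in> insert v J. j \<le> v} = {v}" using assms by auto
  then show ?thesis unfolding wedge_pos_def by simp
qed

lemma wedge_pos_insert_remove_less:
  assumes "finite J" "v \<in> J" "v < i" "i \<notin> J"
  shows "wedge_pos i (insert i J) = Suc (wedge_pos i (insert i (J - {v})))"
proof -
  have "{j \<in> insert i J. j \<le> i} = insert v {j \<in> insert i (J - {v}). j \<le> i}"
    using assms by auto
  then show ?thesis using assms unfolding wedge_pos_def by simp
qed

lemma Sdiff_eq_sum_insert:
  assumes "c \<in> Schains d n a"
  shows "Sdiff d n a c (J, g) = (\<Sum>i\<in>free_points d n g - J.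
            (-1) ^ wedge_pos i (insert i J) * c (insert i J, g))"
proof -
  let ?B = "Sbasis d n a" and ?T = "free_points d n g - J"
  let ?t = "\<lambda>i x. if x = (insert i J, g) then (-1) ^ wedge_pos i (insert i J) * c x else 0"
  have inner: "(\<Sum>i\<in>I. if I - {i} = J \<and> f = g then (-1) ^ wedge_pos i I * c (I, f) else 0)
      = (\<Sum>i\<in>?T. ?t i (I, f))" if "(I, f) \<in> ?B" for I f
  proof -
    have I: "I \<subseteq> {1..n}" "f \<in> {1..d} \<rightarrow>\<^sub>E ({1..n} - I)" "finite I"
      using that Sbasis_D(2)[OF that] unfolding Sbasis_def by auto
    have "{i \<in> I. I - {i} = J \<and> f = g} = {i \<in> ?T. (I, f) = (insert i J, g)}"
      using I by (auto simp: free_points_def PiE_def Pi_def)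
    then show ?thesis
      by (simp add: sum.inter_filter[OF \<open>finite I\<close>, symmetric]
                    sum.inter_filter[symmetric] free_points_def cong: if_cong)
  qed
  have "Sdiff d n a c (J, g) = (\<Sum>x\<in>?B. \<Sum>i\<in>?T. ?t i x)"
    unfolding Sdiff_def prod.case
  proof (rule sum.cong[OF refl])
    fix x assume "x \<in> ?B"
    then show "(case x of (I, f) \<Rightarrow> \<Sum>i\<in>I.
        if I - {i} = J \<and> f = g then (-1) ^ wedge_pos i I * c (I, f) else 0) = (\<Sum>i\<in>?T. ?t i x)"
      by (cases x) (simp only: prod.case inner)
  qed
  also have "\<dots> = (\<Sum>i\<in>?T. \<Sum>x\<in>?B. ?t i x)"
    by (rule sum.swap)
  also have "\<dots> = (\<Sum>i\<in>?T. (-1) ^ wedge_pos i (insert i J) * c (insert i J, g))"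
    using assms finite_Sbasis by (auto simp: Schains_def intro!: sum.cong)
  finally show ?thesis .
qed

lemma Shomotopy_in_Schains: "Shomotopy d n a c \<in> Schains d n (Suc a)"
  unfolding Schains_def Shomotopy_def by auto

lemma Shomotopy_zero: "Shomotopy d n a (\<lambda>_. 0) = (\<lambda>_. 0)"
  unfolding Shomotopy_def by auto

lemma Shomotopy_insert:
  assumes "(J, g) \<in> Sbasis d n a" "i \<in> free_points d n g - J"
  shows "Shomotopy d n a c (insert i J, g) =
    (if first_free d n g \<in> insert i J then - c (insert i J - {first_free d n g}, g) else 0)"
  using insert_in_Sbasis[OF assms] unfolding Shomotopy_def by simp

lemma Sdiff_Shomotopy_outside_Sbasis:
  assumes "(J, g) \<notin> Sbasis d n a"
  shows "Sdiff d n (Suc a) (Shomotopy d n a c) (J, g) = 0"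
proof -
  have "Shomotopy d n a c (insert i J, g) = 0" if "i \<in> free_points d n g - J" for i
    using Sbasis_insertD[of i J g d n a] that assms unfolding Shomotopy_def by auto
  then show ?thesis by (simp add: Sdiff_eq_sum_insert[OF Shomotopy_in_Schains])
qed

lemma Sdiff_Shomotopy_first_free_notin:
  assumes J: "(J, g) \<in> Sbasis d n a" and free: "free_points d n g \<noteq> {}"
    and v: "first_free d n g \<notin> J"
  shows "Sdiff d n (Suc a) (Shomotopy d n a c) (J, g) = c (J, g)"
proof -
  let ?v = "first_free d n g" and ?T = "free_points d n g"
  have vTJ: "?v \<in> ?T - J" using first_free_in[OF free] v by simp
  have "Sdiff d n (Suc a) (Shomotopy d n a c) (J, g)
      = (\<Sum>i\<in>?T - J. (-1) ^ wedge_pos i (insert i J) * Shomotopy d n a c (insert i J, g))"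
    by (rule Sdiff_eq_sum_insert[OF Shomotopy_in_Schains])
  also have "\<dots> = (\<Sum>i\<in>?T - J. if i = ?v
      then (-1) ^ wedge_pos i (insert i J) * Shomotopy d n a c (insert i J, g) else 0)"
    by (rule sum.cong) (auto simp: Shomotopy_insert[OF J] v)
  also have "\<dots> = (-1) ^ wedge_pos ?v (insert ?v J) * Shomotopy d n a c (insert ?v J, g)"
    using vTJ by (simp add: sum.delta')
  also have "wedge_pos ?v (insert ?v J) = 1"
    using Sbasis_D(1)[OF J] v first_free_le
    by (intro wedge_pos_insert_least) (metis le_neq_implies_less subsetD)
  finally show ?thesis using v by (simp add: Shomotopy_insert[OF J vTJ])
qed

text \<open>If v \<in> J, both d h and h d produce the faces (J - {v}) \<union> {i}, with opposite signs since
  moving v to the front of the wedge costs one transposition; only the face i = v of h d survives.\<close>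

lemma Sdiff_Shomotopy_first_free_in:
  assumes c: "c \<in> Schains d n (Suc a)" and J: "(J, g) \<in> Sbasis d n (Suc a)"
    and v: "first_free d n g \<in> J"
  shows "Sdiff d n (Suc (Suc a)) (Shomotopy d n (Suc a) c) (J, g)
      + Shomotopy d n a (Sdiff d n (Suc a) c) (J, g) = c (J, g)"
proof -
  let ?v = "first_free d n g" and ?T = "free_points d n g"
  let ?J' = "J - {?v}"
  let ?S = "\<Sum>i\<in>?T - J. (-1) ^ wedge_pos i (insert i ?J') * c (insert i ?J', g)"
  have JT: "J \<subseteq> ?T" and finJ: "finite J" using Sbasis_D[OF J] by auto
  have v_less: "?v < j" if "j \<in> ?T" "j \<noteq> ?v" for j
    using first_free_le[OF that(1)] that(2) by simp
  have "wedge_pos ?v J = 1"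
    using wedge_pos_insert_least[of ?J' ?v] v_less JT v by (auto simp: insert_absorb)
  moreover have "?T - ?J' = insert ?v (?T - J)" using v JT by auto
  ultimately have "Sdiff d n (Suc a) c (?J', g) = - c (J, g) + ?S"
    using v by (simp add: Sdiff_eq_sum_insert[OF c] insert_absorb)
  then have hd: "Shomotopy d n a (Sdiff d n (Suc a) c) (J, g) = c (J, g) - ?S"
    using J v unfolding Shomotopy_def by simp
  have "Sdiff d n (Suc (Suc a)) (Shomotopy d n (Suc a) c) (J, g)
      = (\<Sum>i\<in>?T - J. (-1) ^ wedge_pos i (insert i J) * Shomotopy d n (Suc a) c (insert i J, g))"
    by (rule Sdiff_eq_sum_insert[OF Shomotopy_in_Schains])
  also have "\<dots> = ?S"
  proof (rule sum.cong[OF refl])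
    fix i assume i: "i \<in> ?T - J"
    then have "?v < i" using v v_less by auto
    then have "wedge_pos i (insert i J) = Suc (wedge_pos i (insert i ?J'))"
      and "insert i J - {?v} = insert i ?J'"
      using wedge_pos_insert_remove_less[OF finJ v] i by auto
    then show "(-1) ^ wedge_pos i (insert i J) * Shomotopy d n (Suc a) c (insert i J, g)
        = (-1) ^ wedge_pos i (insert i ?J') * c (insert i ?J', g)"
      using v by (simp add: Shomotopy_insert[OF J i])
  qed
  finally show ?thesis using hd by simp
qed

lemma Shomotopy_contracting:
  assumes c: "c \<in> Schains d n (Suc a)"
  shows "Sdiff d n (Suc (Suc a)) (Shomotopy d n (Suc a) c) x
      + Shomotopy d n a (Sdiff d n (Suc a) c) x = c x"
proof (cases x)
  case (Pair J g)
  show ?thesis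
  proof (cases "(J, g) \<in> Sbasis d n (Suc a)")
    case False
    then have "Shomotopy d n a (Sdiff d n (Suc a) c) (J, g) = 0"
      unfolding Shomotopy_def by simp
    then show ?thesis
      using Pair Schains_zero[OF c False] Sdiff_Shomotopy_outside_Sbasis[OF False] by simp
  next
    case J: True
    show ?thesis
    proof (cases "first_free d n g \<in> J")
      case True
      then show ?thesis using Pair Sdiff_Shomotopy_first_free_in[OF c J] by simp
    next
      case False
      have "J \<noteq> {}" using Sbasis_D(3)[OF J] by auto
      then have "free_points d n g \<noteq> {}" using Sbasis_D(1)[OF J] by auto
      then have "Sdiff d n (Suc (Suc a)) (Shomotopy d n (Suc a) c) (J, g) = c (J, g)"
        using Sdiff_Shomotopy_first_free_notin[OF J] False by blast
      moreover have "Shomotopy d n a (Sdiff d n (Suc a) c) (J, g) = 0"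
        using False unfolding Shomotopy_def by simp
      ultimately show ?thesis using Pair by simp
    qed
  qed
qed

theorem proposition3p2:
  fixes d n a :: nat and c :: "nat set \<times> (nat \<Rightarrow> nat) \<Rightarrow> 'r::comm_ring_1"
  assumes "a \<ge> 1"
    and "c \<in> Schains d n a"
    and "Sdiff d n a c = (\<lambda>_. 0)"
  shows "\<exists>b \<in> Schains d n (Suc a). Sdiff d n (Suc a) b = c"
proof
  obtain a' where a: "a = Suc a'" using \<open>a \<ge> 1\<close> by (cases a) auto
  show "Shomotopy d n a c \<in> Schains d n (Suc a)"
    by (rule Shomotopy_in_Schains)
  have "Sdiff d n (Suc a) (Shomotopy d n a c) x = c x" for x
    using Shomotopy_contracting[of c d n a' x] assms(2,3)
    unfolding a by (simp add: Shomotopy_zero)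
  then show "Sdiff d n (Suc a) (Shomotopy d n a c) = c" ..
qed

end
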